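(* Let $m\ge n$, let $D$ be an $m\times n$ real matrix of rank $n$, and let $S$ be a compact subset of $\mathbb{R}^n_{>0}$. Then there exists a function $\alpha$ of class $\mathcal{K}_\infty$ such that $|D(\rho(x)-\rho(a))|^2\ge\alpha(|x-a|)$ for all $a\in S$ and all $x\in\mathbb{R}^n_{>0}$, where $\rho(x)=(\ln x_1,\dots,\ln x_n)'$.
   Context: $|\cdot|$ is the Euclidean norm; $\mathcal{K}_\infty$ is the class of continuous strictly increasing unbounded functions $[0,\infty)\to[0,\infty)$ vanishing at $0$. *)

theory Defs
  imports "HOL-Analysis.Analysis"
begin

definition class_K_inf :: "(real \<Rightarrow> real) \<Rightarrow> bool" where
  "class_K_inf \<alpha> \<longleftrightarrow>
     continuous_on {0..} \<alpha> \<and> strict_mono_on {0..} \<alpha> \<and>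
     \<alpha> 0 = 0 \<and> (\<forall>r\<ge>0. \<alpha> r \<ge> 0) \<and>
     (\<forall>M. \<exists>r\<ge>0. \<alpha> r > M)"

definition pos_orthant :: "(real ^ 'n) set" where
  "pos_orthant = {x. \<forall>i. x $ i > 0}"

definition rho :: "real ^ 'n \<Rightarrow> real ^ 'n" where
  "rho x = (\<chi> i. ln (x $ i))"

end

theory Submission
  imports Defs
begin

text \<open>Fix the largest coordinate \<open>i\<close> of \<open>x - a\<close>. Compactness of \<open>S\<close> bounds \<open>a $ i\<close> by some
  \<open>M\<close>, and \<open>ln y \<le> y - 1\<close> gives \<open>ln (1 + \<bar>x $ i - a $ i\<bar> / M) \<le> \<bar>ln (x $ i) - ln (a $ i)\<bar>\<close>.
  Since \<open>\<bar>x $ i - a $ i\<bar>\<close> is at least \<open>norm (x - a) / CARD('n)\<close> and \<open>D\<close>, being injective,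
  is bounded below by some \<open>c > 0\<close>, the function \<open>r \<mapsto> c\<^sup>2 (ln (1 + r / (CARD('n) M)))\<^sup>2\<close>
  works as \<open>\<alpha>\<close>.\<close>

lemma ln_one_plus_dist_le_dist_ln:
  fixes s t M :: real
  assumes s: "0 < s" "s \<le> M" and t: "0 < t"
  shows "ln (1 + \<bar>t - s\<bar> / M) \<le> \<bar>ln t - ln s\<bar>"
proof (cases "s \<le> t")
  case True
  have "1 + \<bar>t - s\<bar> / M \<le> 1 + (t - s) / s"
    using True s by (simp add: frac_le)
  also have "\<dots> = t / s" using s by (simp add: field_simps)
  finally have "ln (1 + \<bar>t - s\<bar> / M) \<le> ln (t / s)"
    using s True by (subst ln_le_cancel_iff) (auto intro: add_pos_nonneg)
  also have "\<dots> = ln t - ln s" using s t by (simp add: ln_div)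
  finally show ?thesis by linarith
next
  case False
  have "ln (1 + \<bar>t - s\<bar> / M) \<le> \<bar>t - s\<bar> / M"
    using s by (intro ln_add_one_self_le_self) simp
  also have "\<dots> \<le> (s - t) / s" using False s by (simp add: frac_le)
  also have "\<dots> = 1 - t / s" using s by (simp add: field_simps)
  also have "\<dots> \<le> - ln (t / s)" using ln_le_minus_one[of "t / s"] s t by simp
  also have "\<dots> = ln s - ln t" using s t by (simp add: ln_div)
  finally show ?thesis by linarith
qed

lemma class_K_inf_scaled_ln_one_plus_sq:
  fixes K L :: real
  assumes K: "0 < K" and L: "0 < L"
  shows "class_K_inf (\<lambda>r. K * (ln (1 + r / L))\<^sup>2)"
  unfolding class_K_inf_def
proof (intro conjI allI impI)
  show "continuous_on {0..} (\<lambda>r. K * (ln (1 + r / L))\<^sup>2)"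
    using L by (intro continuous_intros) (auto, smt (verit) divide_nonneg_pos)
  show "strict_mono_on {0..} (\<lambda>r. K * (ln (1 + r / L))\<^sup>2)"
  proof (rule strict_mono_onI)
    fix r s :: real
    assume "r \<in> {0..}" "r < s"
    then have rs: "r / L < s / L" "0 \<le> r / L"
      using L by (auto simp: divide_strict_right_mono)
    then have "ln (1 + r / L) < ln (1 + s / L)" "0 \<le> ln (1 + r / L)"
      by (subst ln_less_cancel_iff; linarith) (simp add: rs)
    then show "K * (ln (1 + r / L))\<^sup>2 < K * (ln (1 + s / L))\<^sup>2"
      using K by (simp add: power_strict_mono)
  qed
  show "K * (ln (1 + 0 / L))\<^sup>2 = 0" by simp
  show "0 \<le> K * (ln (1 + r / L))\<^sup>2" for r using K by simp
  fix M :: real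
  define t where "t = \<bar>M\<bar> / K + 1"
  have t1: "1 \<le> t" using K by (simp add: t_def)
  define r where "r = L * (exp t - 1)"
  have "0 \<le> r" using t1 L by (simp add: r_def)
  moreover have "ln (1 + r / L) = t" using L by (simp add: r_def)
  moreover have "M < K * t"
    using K by (simp add: t_def distrib_left)
  moreover have "K * t \<le> K * t\<^sup>2"
    using t1 K by (simp add: power2_eq_square)
  ultimately show "\<exists>r\<ge>0. M < K * (ln (1 + r / L))\<^sup>2" by force
qed

lemma exists_component_norm_le_card_mult:
  fixes v :: "real ^ 'n"
  obtains i where "norm v \<le> real CARD('n) * \<bar>v $ i\<bar>"
proof -
  obtain i where i: "\<And>j. \<bar>v $ j\<bar> \<le> \<bar>v $ i\<bar>"
  proof -
    have "Max (range (\<lambda>j. \<bar>v $ j\<bar>)) \<in> range (\<lambda>j. \<bar>v $ j\<bar>)"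
      by (rule Max_in) auto
    then obtain i where i: "Max (range (\<lambda>j. \<bar>v $ j\<bar>)) = \<bar>v $ i\<bar>" by blast
    have "\<bar>v $ j\<bar> \<le> Max (range (\<lambda>j. \<bar>v $ j\<bar>))" for j by (rule Max_ge) auto
    with i show ?thesis by (intro that) simp
  qed
  have "norm v \<le> (\<Sum>j\<in>UNIV. \<bar>v $ j\<bar>)" by (rule norm_le_l1_cart)
  also have "\<dots> \<le> (\<Sum>j\<in>(UNIV::'n set). \<bar>v $ i\<bar>)" by (rule sum_mono) (rule i)
  also have "\<dots> = real CARD('n) * \<bar>v $ i\<bar>" by simp
  finally show ?thesis by (rule that)
qed

lemma full_rank_matrix_bounded_below:
  fixes D :: "real ^ 'n ^ 'm"
  assumes "rank D = CARD('n)"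
  obtains c where "0 < c" "\<And>v. c * norm v \<le> norm (D *v v)"
proof -
  have "inj ((*v) D)" using assms full_rank_injective by blast
  with matrix_vector_mul_linear[of D] show ?thesis
    using linear_inj_bounded_below_pos that by blast
qed

lemma ln_one_plus_norm_diff_le_norm_rho_diff:
  fixes a x :: "real ^ 'n"
  assumes a: "a \<in> pos_orthant" "norm a \<le> M" and x: "x \<in> pos_orthant"
  shows "ln (1 + norm (x - a) / (real CARD('n) * M)) \<le> norm (rho x - rho a)"
proof -
  obtain i where i: "norm (x - a) \<le> real CARD('n) * \<bar>(x - a) $ i\<bar>"
    by (rule exists_component_norm_le_card_mult)
  have ai: "0 < a $ i" "a $ i \<le> M"
    using a component_le_norm_cart[of a i] by (auto simp: pos_orthant_def)
  have xi: "0 < x $ i" using x by (simp add: pos_orthant_def)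
  have "norm (x - a) / (real CARD('n) * M) \<le> \<bar>x $ i - a $ i\<bar> / M"
    using i ai by (simp add: field_simps mult.commute)
  then have "ln (1 + norm (x - a) / (real CARD('n) * M)) \<le> ln (1 + \<bar>x $ i - a $ i\<bar> / M)"
    using ai by (subst ln_le_cancel_iff) (auto intro: add_pos_nonneg)
  also have "\<dots> \<le> \<bar>ln (x $ i) - ln (a $ i)\<bar>"
    using ln_one_plus_dist_le_dist_ln[OF ai xi] .
  also have "\<dots> = \<bar>(rho x - rho a) $ i\<bar>" by (simp add: rho_def)
  also have "\<dots> \<le> norm (rho x - rho a)" by (rule component_le_norm_cart)
  finally show ?thesis .
qed

theorem lemmaA2:
  fixes D :: "real ^ 'n ^ 'm" and S :: "(real ^ 'n) set"
  assumes "CARD('m) \<ge> CARD('n)"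
    and "rank D = CARD('n)"
    and "compact S" and "S \<subseteq> pos_orthant"
  shows "\<exists>\<alpha>. class_K_inf \<alpha> \<and>
           (\<forall>a\<in>S. \<forall>x\<in>pos_orthant. (norm (D *v (rho x - rho a)))\<^sup>2 \<ge> \<alpha> (norm (x - a)))"
proof -
  obtain c where c: "0 < c" "\<And>v. c * norm v \<le> norm (D *v v)"
    using full_rank_matrix_bounded_below[OF assms(2)] by blast
  obtain M where M: "0 < M" "\<And>a. a \<in> S \<Longrightarrow> norm a \<le> M"
    using compact_imp_bounded[OF assms(3)] by (meson bounded_pos)
  define L where "L = real CARD('n) * M"
  define \<alpha> where "\<alpha> = (\<lambda>r. c\<^sup>2 * (ln (1 + r / L))\<^sup>2)"
  have "class_K_inf \<alpha>"
    unfolding \<alpha>_def L_def using c(1) M(1) by (simp add: class_K_inf_scaled_ln_one_plus_sq)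
  moreover have "\<alpha> (norm (x - a)) \<le> (norm (D *v (rho x - rho a)))\<^sup>2"
    if a: "a \<in> S" and x: "x \<in> pos_orthant" for a x
  proof -
    have "c * ln (1 + norm (x - a) / L) \<le> c * norm (rho x - rho a)"
      using ln_one_plus_norm_diff_le_norm_rho_diff[of a M x] a x assms(4) M(2) c(1)
      unfolding L_def by auto
    also have "\<dots> \<le> norm (D *v (rho x - rho a))" by (rule c(2))
    finally have "(c * ln (1 + norm (x - a) / L))\<^sup>2 \<le> (norm (D *v (rho x - rho a)))\<^sup>2"
      using c(1) M(1) by (intro power_mono) (auto simp: L_def)
    then show ?thesis by (simp add: \<alpha>_def power_mult_distrib)
  qed
  ultimately show ?thesis by blast
qed

end
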